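(* Let $p$ be a prime and let $H$ be a finite non-abelian group whose order is not divisible by $p$. Let $W\cong H\wr C$ where $C$ is cyclic of order $p$ (the regular wreath product, with base group $H^p$ permuted cyclically by $C$), and let $x\in W$ have order $p$. Then there exists $w\in W$ such that $x^w x$ is not a $p$-element. *)

theory Defs
  imports "HOL-Algebra.Algebra"
begin

text \<open>Elements are pairs (f, a) with f : {0..<p} \<rightarrow> carrier H
  (extensional) and a \<in> {0..<p} (the cyclic group Z/pZ written additively);
  C_p permutes the p coordinates of the base group cyclically:
  (f, a) * (g, b) = (\<lambda>i. f i * g ((i + a) mod p), (a + b) mod p).\<close>

definition wreath_cyc :: "('a, 'b) monoid_scheme \<Rightarrow> nat \<Rightarrow> ((nat \<Rightarrow> 'a) \<times> nat) monoid" where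
  "wreath_cyc H p =
     \<lparr> carrier = {(f, a). f \<in> {0..<p} \<rightarrow>\<^sub>E carrier H \<and> a < p},
       monoid.mult = (\<lambda>(f, a) (g, b).
                 (\<lambda>i\<in>{0..<p}. f i \<otimes>\<^bsub>H\<^esub> g ((i + a) mod p), (a + b) mod p)),
       one = (\<lambda>i\<in>{0..<p}. \<one>\<^bsub>H\<^esub>, 0) \<rparr>"

definition conj_elt :: "('a, 'b) monoid_scheme \<Rightarrow> 'a \<Rightarrow> 'a \<Rightarrow> 'a" where
  "conj_elt G x w = inv\<^bsub>G\<^esub> w \<otimes>\<^bsub>G\<^esub> x \<otimes>\<^bsub>G\<^esub> w"

definition p_element :: "('a, 'b) monoid_scheme \<Rightarrow> nat \<Rightarrow> 'a \<Rightarrow> bool" where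
  "p_element G p x \<longleftrightarrow> (\<exists>k. group.ord G x = p ^ k)"

end

theory Submission
  imports Defs "HOL-Number_Theory.Cong"
begin

(* An element x of order p in H wr C_p has nonzero top component a, and the product of its base
   coordinates along the p-cycle is trivial; hence a base element conjugates it to rot a = (1, a).
   For a base element d = (h, 0), (rot a)^d rot a = (i \<mapsto> h(i)^-1 h(i + a), 2a).  Take h
   supported on {0, a} with non-commuting values u, v.  For p = 2 this element already lies in the
   base group and is nontrivial; for odd p its p-th power lies in the base group, and reading the
   cycle product from the coordinate -a (the step 2a reaches a after one step and 0 after (p + 1)/2
   steps) gives u v^-1 u^-1 v \<noteq> 1.  Finally, p \<not>| |H| forces every p-element of the base group
   H^p to be trivial, so neither element can be a p-element. *)

fun seq_prod :: "('a, 'b) monoid_scheme \<Rightarrow> (nat \<Rightarrow> 'a) \<Rightarrow> nat \<Rightarrow> 'a" where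
  "seq_prod G s 0 = \<one>\<^bsub>G\<^esub>"
| "seq_prod G s (Suc n) = seq_prod G s n \<otimes>\<^bsub>G\<^esub> s n"

lemma (in group) seq_prod_closed:
  "(\<And>k. k < n \<Longrightarrow> s k \<in> carrier G) \<Longrightarrow> seq_prod G s n \<in> carrier G"
  by (induction n) auto

lemma (in group) seq_prod_const: "c \<in> carrier G \<Longrightarrow> seq_prod G (\<lambda>_. c) n = c [^] n"
  by (induction n) auto

lemma (in group) seq_prod_trailing_ones:
  assumes "m \<le> n" "\<And>k. m \<le> k \<Longrightarrow> k < n \<Longrightarrow> s k = \<one>" "\<And>k. k < n \<Longrightarrow> s k \<in> carrier G"
  shows "seq_prod G s n = seq_prod G s m"
  using assms by (induction n) (auto simp: le_Suc_eq seq_prod_closed)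

lemma (in group) seq_prod_three_support:
  assumes "1 < m" "m < n" "\<And>k. k < n \<Longrightarrow> s k \<in> carrier G"
    and "\<And>k. k < n \<Longrightarrow> k \<notin> {0, 1, m} \<Longrightarrow> s k = \<one>"
  shows "seq_prod G s n = s 0 \<otimes> s 1 \<otimes> s m"
proof -
  have "seq_prod G s n = seq_prod G s (Suc m)"
    by (rule seq_prod_trailing_ones) (use assms in auto)
  also have "\<dots> = seq_prod G s m \<otimes> s m"
    by simp
  also have "seq_prod G s m = seq_prod G s 2"
    by (rule seq_prod_trailing_ones) (use assms in auto)
  also have "seq_prod G s 2 = s 0 \<otimes> s 1"
    using assms by (simp add: numeral_2_eq_2)
  finally show ?thesis .
qed

lemma (in group) seq_prod_reindex_three_support:
  assumes inj: "inj_on \<pi> {..<n}" and m: "1 < m" "m < n"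
    and closed: "\<And>k. k < n \<Longrightarrow> g (\<pi> k) \<in> carrier G"
    and ones: "\<And>k. k < n \<Longrightarrow> \<pi> k \<notin> {\<pi> 0, \<pi> 1, \<pi> m} \<Longrightarrow> g (\<pi> k) = \<one>"
  shows "seq_prod G (\<lambda>k. g (\<pi> k)) n = g (\<pi> 0) \<otimes> g (\<pi> 1) \<otimes> g (\<pi> m)"
proof (rule seq_prod_three_support[OF m closed])
  fix k assume k: "k < n" "k \<notin> {0, 1, m}"
  have "\<pi> k \<noteq> \<pi> j" if j: "j \<in> {0, 1, m}" for j
  proof
    assume "\<pi> k = \<pi> j"
    moreover have "j < n"
      using j m by auto
    ultimately have "k = j"
      using k(1) by (meson inj inj_onD lessThan_iff)
    with j k(2) show False
      by simp
  qed
  then show "g (\<pi> k) = \<one>"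
    using ones k(1) by blast
qed

lemma (in group) commute_if_commutator_eq_one:
  assumes u: "u \<in> carrier G" and v: "v \<in> carrier G" and e: "u \<otimes> inv v \<otimes> (inv u \<otimes> v) = \<one>"
  shows "u \<otimes> v = v \<otimes> u"
proof -
  have "inv (inv u \<otimes> v) = u \<otimes> inv v"
    using e u v by (intro inv_equality) auto
  then have swap: "inv v \<otimes> u = u \<otimes> inv v"
    using u v by (simp add: inv_mult_group)
  have "u \<otimes> v = v \<otimes> (inv v \<otimes> u) \<otimes> v"
    using u v by (simp add: m_assoc[symmetric])
  also have "\<dots> = v \<otimes> u"
    using u v by (simp add: swap m_assoc)
  finally show ?thesis .
qed

lemma (in group) conjugation_iso: "c \<in> carrier G \<Longrightarrow> (\<lambda>z. inv c \<otimes> z \<otimes> c) \<in> iso G G"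
  unfolding iso_iff
proof (intro conjI)
  assume c: "c \<in> carrier G"
  have cancel: "c \<otimes> (inv c \<otimes> z) = z" "inv c \<otimes> (c \<otimes> z) = z" if "z \<in> carrier G" for z
    using c that by (simp_all add: m_assoc[symmetric])
  show "(\<lambda>z. inv c \<otimes> z \<otimes> c) \<in> hom G G"
    using c by (auto simp: hom_def m_assoc cancel)
  show "(\<lambda>z. inv c \<otimes> z \<otimes> c) ` carrier G = carrier G"
  proof
    show "carrier G \<subseteq> (\<lambda>z. inv c \<otimes> z \<otimes> c) ` carrier G"
    proof
      fix y assume y: "y \<in> carrier G"
      then have "y = inv c \<otimes> (c \<otimes> y \<otimes> inv c) \<otimes> c"
        using c by (simp add: m_assoc cancel)
      then show "y \<in> (\<lambda>z. inv c \<otimes> z \<otimes> c) ` carrier G"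
        using c y by blast
    qed
  qed (use c in auto)
  show "inj_on (\<lambda>z. inv c \<otimes> z \<otimes> c) (carrier G)"
    using c by (auto simp: inj_on_def)
qed

lemma ord_iso:
  assumes "group G" "group K" "\<phi> \<in> iso G K" "y \<in> carrier G"
  shows "group.ord K (\<phi> y) = group.ord G y"
proof -
  interpret G: group G by fact
  interpret K: group K by fact
  interpret group_hom G K \<phi>
    using assms by (simp add: group_hom_def group_hom_axioms_def iso_imp_homomorphism)
  have "\<phi> y [^]\<^bsub>K\<^esub> n = \<one>\<^bsub>K\<^esub> \<longleftrightarrow> y [^]\<^bsub>G\<^esub> n = \<one>\<^bsub>G\<^esub>" for n :: nat
    using assms(3,4) by (metis G.nat_pow_closed hom_nat_pow hom_one iso_iff inj_onD)
  then show ?thesis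
    using assms(4) by (simp add: K.ord_unique G.pow_eq_id)
qed

lemma (in group_hom) conj_elt_mult_hom:
  "x \<in> carrier G \<Longrightarrow> w \<in> carrier G \<Longrightarrow>
     h (conj_elt G x w \<otimes>\<^bsub>G\<^esub> x) = conj_elt H (h x) (h w) \<otimes>\<^bsub>H\<^esub> h x"
  by (simp add: conj_elt_def)

lemma exists_conj_mult_not_p_element_iso:
  assumes "group G" "group K" "\<phi> \<in> iso G K" "x \<in> carrier G"
    and "w' \<in> carrier K" "\<not> p_element K p (conj_elt K (\<phi> x) w' \<otimes>\<^bsub>K\<^esub> \<phi> x)"
  shows "\<exists>w \<in> carrier G. \<not> p_element G p (conj_elt G x w \<otimes>\<^bsub>G\<^esub> x)"
proof -
  interpret G: group G by fact
  interpret group_hom G K \<phi>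
    using assms by (simp add: group_hom_def group_hom_axioms_def iso_imp_homomorphism)
  obtain w where w: "w \<in> carrier G" "\<phi> w = w'"
    using assms(3,5) by (auto simp: iso_iff)
  have "conj_elt G x w \<otimes>\<^bsub>G\<^esub> x \<in> carrier G"
    using w assms(4) by (simp add: conj_elt_def)
  then have "group.ord K (conj_elt K (\<phi> x) w' \<otimes>\<^bsub>K\<^esub> \<phi> x) = G.ord (conj_elt G x w \<otimes>\<^bsub>G\<^esub> x)"
    using ord_iso[OF assms(1-3)] conj_elt_mult_hom w assms(4) by metis
  then show ?thesis
    using w assms(6) by (auto simp: p_element_def)
qed

lemma add_mod_eq_if:
  fixes i j p :: nat
  assumes "i < p" "j < p"
  shows "(i + j) mod p = (if i + j < p then i + j else i + j - p)"
  using assms by (subst mod_if) auto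

lemma half_succ_mult_double_cong:
  fixes a p :: nat
  assumes "odd p"
  shows "[(p + 1) div 2 * (a + a) = a] (mod p)"
proof -
  have "(p + 1) div 2 * (a + a) = p * a + a"
    using assms by (auto simp: algebra_simps elim!: oddE)
  then show ?thesis
    by (simp add: cong_def)
qed

lemma inj_on_affine_mod:
  fixes b c p :: nat
  assumes "coprime b p"
  shows "inj_on (\<lambda>k. (c + k * b) mod p) {..<p}"
proof (rule inj_onI)
  fix k k' assume k: "k \<in> {..<p}" "k' \<in> {..<p}" and eq: "(c + k * b) mod p = (c + k' * b) mod p"
  from eq have "[c + k * b = c + k' * b] (mod p)"
    unfolding cong_def .
  then have "[k * b = k' * b] (mod p)"
    by (simp add: cong_add_lcancel_nat)
  then have "[k = k'] (mod p)"
    using assms cong_mult_rcancel_nat by blast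
  then show "k = k'"
    using k cong_less_modulus_unique_nat by auto
qed

lemma double_step_orbit:
  fixes a p :: nat
  assumes p: "Factorial_Ring.prime p" "odd p" and a: "0 < a" "a < p"
  defines "b \<equiv> (a + a) mod p"
  shows "coprime b p"
    and "(p - a + b) mod p = a"
    and "(p - a + (p + 1) div 2 * b) mod p = 0"
proof -
  have "a + a \<noteq> p"
    using \<open>odd p\<close> by auto
  then have "\<not> p dvd b"
    using a by (auto simp: b_def add_mod_eq_if dest: dvd_imp_le)
  then show "coprime b p"
    using prime_imp_coprime[OF p(1)] by (simp add: coprime_commute)
  have "p - a + b = (if a + a < p then p + a else a)"
    using a by (auto simp: b_def add_mod_eq_if)
  then show "(p - a + b) mod p = a"
    using a by auto
  have "[(p + 1) div 2 * b = a] (mod p)"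
    using half_succ_mult_double_cong[OF \<open>odd p\<close>, of a] by (simp add: b_def cong_def mod_mult_right_eq)
  then have "[p - a + (p + 1) div 2 * b = p - a + a] (mod p)"
    by (simp only: cong_add_lcancel_nat)
  then show "(p - a + (p + 1) div 2 * b) mod p = 0"
    using a by (simp add: cong_def)
qed

locale wreath_cyclic = H: group H for H :: "('a, 'b) monoid_scheme" and p :: nat +
  assumes p_pos: "0 < p"
begin

abbreviation G where "G \<equiv> wreath_cyc H p"

lemma carrier_wreath: "(f, a) \<in> carrier G \<longleftrightarrow> f \<in> {0..<p} \<rightarrow>\<^sub>E carrier H \<and> a < p"
  by (simp add: wreath_cyc_def)

lemma mult_wreath:
  "(f, a) \<otimes>\<^bsub>G\<^esub> (g, b) = (\<lambda>i\<in>{0..<p}. f i \<otimes>\<^bsub>H\<^esub> g ((i + a) mod p), (a + b) mod p)"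
  by (simp add: wreath_cyc_def)

lemma one_wreath: "\<one>\<^bsub>G\<^esub> = (\<lambda>i\<in>{0..<p}. \<one>\<^bsub>H\<^esub>, 0)"
  by (simp add: wreath_cyc_def)

lemma PiE_closed: "f \<in> {0..<p} \<rightarrow>\<^sub>E carrier H \<Longrightarrow> i < p \<Longrightarrow> f i \<in> carrier H"
  by auto

lemma PiE_mod_closed: "f \<in> {0..<p} \<rightarrow>\<^sub>E carrier H \<Longrightarrow> f (j mod p) \<in> carrier H"
  using p_pos by auto

lemma restrict_eq_PiE:
  assumes "f \<in> {0..<p} \<rightarrow>\<^sub>E carrier H" "\<And>i. i < p \<Longrightarrow> g i = f i"
  shows "(\<lambda>i\<in>{0..<p}. g i) = f"
proof -
  have "(\<lambda>i\<in>{0..<p}. g i) = (\<lambda>i\<in>{0..<p}. f i)"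
    using assms(2) by (intro restrict_ext) simp
  then show ?thesis
    using PiE_restrict[OF assms(1)] by simp
qed

lemma monoid_wreath: "monoid G"
proof
  fix x y assume "x \<in> carrier G" "y \<in> carrier G"
  then show "x \<otimes>\<^bsub>G\<^esub> y \<in> carrier G"
    by (cases x; cases y) (auto simp: carrier_wreath mult_wreath PiE_mod_closed)
next
  fix x y z assume "x \<in> carrier G" "y \<in> carrier G" "z \<in> carrier G"
  then show "x \<otimes>\<^bsub>G\<^esub> y \<otimes>\<^bsub>G\<^esub> z = x \<otimes>\<^bsub>G\<^esub> (y \<otimes>\<^bsub>G\<^esub> z)"
    by (cases x; cases y; cases z)
      (auto simp: carrier_wreath mult_wreath PiE_closed PiE_mod_closed H.m_assoc mod_add_right_eq
         mod_add_left_eq add.assoc intro!: restrict_ext)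
next
  show "\<one>\<^bsub>G\<^esub> \<in> carrier G"
    using p_pos by (auto simp: one_wreath carrier_wreath)
next
  fix x assume "x \<in> carrier G"
  then show "\<one>\<^bsub>G\<^esub> \<otimes>\<^bsub>G\<^esub> x = x"
    by (cases x) (auto simp: carrier_wreath mult_wreath one_wreath PiE_closed intro!: restrict_eq_PiE)
next
  fix x assume "x \<in> carrier G"
  then show "x \<otimes>\<^bsub>G\<^esub> \<one>\<^bsub>G\<^esub> = x"
    by (cases x) (auto simp: carrier_wreath mult_wreath one_wreath PiE_closed PiE_mod_closed intro!: restrict_eq_PiE)
qed

lemma group_wreath: "group G"
proof (rule monoid.group_l_invI[OF monoid_wreath])
  fix x assume x: "x \<in> carrier G"
  obtain f a where fa: "x = (f, a)"
    by fastforce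
  let ?y = "(\<lambda>i\<in>{0..<p}. inv\<^bsub>H\<^esub> f ((i + (p - a)) mod p), (p - a) mod p)"
  have "?y \<in> carrier G"
    using x fa by (auto simp: carrier_wreath PiE_mod_closed)
  moreover have "?y \<otimes>\<^bsub>G\<^esub> x = \<one>\<^bsub>G\<^esub>"
    using x fa by (auto simp: carrier_wreath mult_wreath one_wreath mod_add_right_eq
        mod_add_left_eq PiE_mod_closed intro!: restrict_ext)
  ultimately show "\<exists>y\<in>carrier G. y \<otimes>\<^bsub>G\<^esub> x = \<one>\<^bsub>G\<^esub>"
    by blast
qed

sublocale G: group G
  by (rule group_wreath)

lemma inv_base:
  assumes "h \<in> {0..<p} \<rightarrow>\<^sub>E carrier H"
  shows "inv\<^bsub>G\<^esub> (h, 0) = (\<lambda>i\<in>{0..<p}. inv\<^bsub>H\<^esub> h i, 0)"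
  using assms p_pos
  by (intro G.inv_equality) (auto simp: carrier_wreath mult_wreath one_wreath PiE_closed intro!: restrict_ext)

lemma pow_wreath:
  assumes "(f, a) \<in> carrier G"
  shows "(f, a) [^]\<^bsub>G\<^esub> n
    = (\<lambda>i\<in>{0..<p}. seq_prod H (\<lambda>k. f ((i + k * a) mod p)) n, (n * a) mod p)"
proof (induction n)
  case 0
  then show ?case
    by (simp add: one_wreath restrict_def)
next
  case (Suc n)
  have "(f, a) [^]\<^bsub>G\<^esub> Suc n
      = (\<lambda>i\<in>{0..<p}. seq_prod H (\<lambda>k. f ((i + k * a) mod p)) n, (n * a) mod p) \<otimes>\<^bsub>G\<^esub> (f, a)"
    by (simp only: G.nat_pow_Suc Suc.IH)
  also have "\<dots> = (\<lambda>i\<in>{0..<p}. seq_prod H (\<lambda>k. f ((i + k * a) mod p)) (Suc n), (Suc n * a) mod p)"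
    unfolding mult_wreath
  proof (intro arg_cong2[where f = Pair] restrict_ext)
    show "((n * a) mod p + a) mod p = (Suc n * a) mod p"
      by (metis add.commute mod_add_left_eq mult_Suc)
  qed (simp add: mod_add_right_eq add.assoc)
  finally show ?case .
qed

definition rot :: "nat \<Rightarrow> (nat \<Rightarrow> 'a) \<times> nat" where
  "rot a = (\<lambda>i\<in>{0..<p}. \<one>\<^bsub>H\<^esub>, a)"

definition coboundary :: "nat \<Rightarrow> (nat \<Rightarrow> 'a) \<Rightarrow> nat \<Rightarrow> 'a" where
  "coboundary a h = (\<lambda>i\<in>{0..<p}. inv\<^bsub>H\<^esub> h i \<otimes>\<^bsub>H\<^esub> h ((i + a) mod p))"

lemma rot_closed: "a < p \<Longrightarrow> rot a \<in> carrier G"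
  by (auto simp: rot_def carrier_wreath)

lemma conj_rot_mult_rot:
  assumes "h \<in> {0..<p} \<rightarrow>\<^sub>E carrier H" "a < p"
  shows "conj_elt G (rot a) (h, 0) \<otimes>\<^bsub>G\<^esub> rot a = (coboundary a h, (a + a) mod p)"
  using assms p_pos
  by (auto simp: conj_elt_def inv_base rot_def coboundary_def mult_wreath PiE_closed PiE_mod_closed
      intro!: restrict_ext)

lemma base_eq_one_if_pow_coprime:
  assumes g: "(g, 0) \<in> carrier G" and pow: "(g, 0) [^]\<^bsub>G\<^esub> N = \<one>\<^bsub>G\<^esub>"
    and coprime: "coprime N (order H)"
  shows "(g, 0) = \<one>\<^bsub>G\<^esub>"
proof -
  have "g i = \<one>\<^bsub>H\<^esub>" if i: "i < p" for i
  proof -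
    have gi: "g i \<in> carrier H"
      using g i by (auto simp: carrier_wreath)
    have "g i [^]\<^bsub>H\<^esub> N = fst ((g, 0) [^]\<^bsub>G\<^esub> N) i"
      using g i by (simp add: pow_wreath H.seq_prod_const gi)
    then have "g i [^]\<^bsub>H\<^esub> N = \<one>\<^bsub>H\<^esub>"
      using pow i by (simp add: one_wreath)
    then have "H.ord (g i) dvd N"
      using gi H.pow_eq_id by blast
    moreover have "H.ord (g i) dvd order H"
      using gi H.ord_dvd_group_order by blast
    ultimately have "H.ord (g i) = 1"
      using coprime by (meson coprime_common_divisor_nat)
    then show ?thesis
      using gi H.ord_eq_1 by blast
  qed
  then show ?thesis
    using g by (auto simp: one_wreath carrier_wreath intro!: restrict_eq_PiE[symmetric])
qed

lemma orbit_prod_mod: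
  assumes x: "(f, a) \<in> carrier G" and xp: "(f, a) [^]\<^bsub>G\<^esub> p = \<one>\<^bsub>G\<^esub>"
  shows "seq_prod H (\<lambda>j. f ((j * a) mod p)) k = seq_prod H (\<lambda>j. f ((j * a) mod p)) (k mod p)"
proof -
  have "(f, a) [^]\<^bsub>G\<^esub> k = (f, a) [^]\<^bsub>G\<^esub> (k mod p)"
    using x xp by (metis div_mult_mod_eq G.nat_pow_mult G.nat_pow_pow G.nat_pow_one G.l_one
        G.nat_pow_closed mult.commute)
  moreover have "seq_prod H (\<lambda>j. f ((j * a) mod p)) n = fst ((f, a) [^]\<^bsub>G\<^esub> n) 0" for n
    using p_pos by (simp add: pow_wreath[OF x])
  ultimately show ?thesis
    by metis
qed

lemma commute_base_rot_if_pow_eq_one: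
  assumes x: "(f, a) \<in> carrier G" and coprime: "coprime a p" and xp: "(f, a) [^]\<^bsub>G\<^esub> p = \<one>\<^bsub>G\<^esub>"
  obtains h where "h \<in> {0..<p} \<rightarrow>\<^sub>E carrier H" "(f, a) \<otimes>\<^bsub>G\<^esub> (h, 0) = (h, 0) \<otimes>\<^bsub>G\<^esub> rot a"
proof -
  obtain a' where a': "[a * a' = 1] (mod p)"
    using cong_solve_coprime_nat coprime by auto
  have f: "f \<in> {0..<p} \<rightarrow>\<^sub>E carrier H" "a < p"
    using x by (auto simp: carrier_wreath)
  define Q where "Q k = seq_prod H (\<lambda>j. f ((j * a) mod p)) k" for k
  have Q_closed: "Q k \<in> carrier H" for k
    unfolding Q_def using f by (intro H.seq_prod_closed PiE_mod_closed) auto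
  have Q_cong: "Q k = Q k'" if "[k = k'] (mod p)" for k k'
    using that orbit_prod_mod[OF x xp] unfolding Q_def cong_def by metis
  (* Q k multiplies f along the first k points 0, a, 2a, ... of the orbit of 0, so h i inverts
     the product up to the point i = (i a') a; Q is p-periodic because (f, a)^p = 1. *)
  define h where "h = (\<lambda>i\<in>{0..<p}. inv\<^bsub>H\<^esub> Q (i * a'))"
  have h: "h \<in> {0..<p} \<rightarrow>\<^sub>E carrier H"
    by (simp add: h_def Q_closed)
  have h_step: "f i \<otimes>\<^bsub>H\<^esub> h ((i + a) mod p) = h i" if i: "i < p" for i
  proof -
    have "[((i + a) mod p) * a' = (i + a) * a'] (mod p)"
      by (simp add: cong_def mod_mult_left_eq)
    also have "(i + a) * a' = i * a' + a * a'"
      by (simp add: algebra_simps)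
    also have "[\<dots> = Suc (i * a')] (mod p)"
      using a' cong_add_lcancel_nat[of "i * a'" "a * a'" 1 p] by simp
    finally have "Q (((i + a) mod p) * a') = Q (Suc (i * a'))"
      by (rule Q_cong)
    also have "\<dots> = Q (i * a') \<otimes>\<^bsub>H\<^esub> f ((i * a' * a) mod p)"
      by (simp add: Q_def)
    also have "(i * a' * a) mod p = i"
    proof -
      have "[i * (a * a') = i * 1] (mod p)"
        using a' by (rule cong_scalar_left)
      then show ?thesis
        using i by (simp add: cong_def ac_simps)
    qed
    finally have "h ((i + a) mod p) = inv\<^bsub>H\<^esub> f i \<otimes>\<^bsub>H\<^esub> inv\<^bsub>H\<^esub> Q (i * a')"
      using p_pos i f by (simp add: h_def H.inv_mult_group Q_closed PiE_closed)
    then show ?thesis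
      using i f by (simp add: h_def Q_closed PiE_closed H.m_assoc[symmetric])
  qed
  have "(f, a) \<otimes>\<^bsub>G\<^esub> (h, 0) = (h, 0) \<otimes>\<^bsub>G\<^esub> rot a"
    using f h p_pos
    by (auto simp: mult_wreath rot_def h_step PiE_closed intro!: restrict_ext)
  with h that show ?thesis
    by blast
qed

definition two_point :: "nat \<Rightarrow> 'a \<Rightarrow> 'a \<Rightarrow> nat \<Rightarrow> 'a" where
  "two_point a u v = (\<lambda>i\<in>{0..<p}. if i = 0 then u else if i = a then v else \<one>\<^bsub>H\<^esub>)"

lemma two_point_closed:
  "u \<in> carrier H \<Longrightarrow> v \<in> carrier H \<Longrightarrow> two_point a u v \<in> {0..<p} \<rightarrow>\<^sub>E carrier H"
  by (auto simp: two_point_def)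

lemma coboundary_two_point:
  assumes "0 < a" "a < p" "a + a \<noteq> p" "u \<in> carrier H" "v \<in> carrier H"
  shows "coboundary a (two_point a u v) (p - a) = u"
    and "coboundary a (two_point a u v) a = inv\<^bsub>H\<^esub> v"
    and "coboundary a (two_point a u v) 0 = inv\<^bsub>H\<^esub> u \<otimes>\<^bsub>H\<^esub> v"
    and "\<And>j. j < p \<Longrightarrow> j \<notin> {0, a, p - a} \<Longrightarrow> coboundary a (two_point a u v) j = \<one>\<^bsub>H\<^esub>"
  using assms by (auto simp: coboundary_def two_point_def add_mod_eq_if)

end

locale wreath_prime = wreath_cyclic +
  assumes prime_p: "Factorial_Ring.prime p" and p_ndvd_order: "\<not> p dvd order H"
begin

lemma coprime_prime_power_order: "coprime (p ^ m) (order H)"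
  using prime_p p_ndvd_order by (simp add: prime_imp_coprime)

lemma not_p_element_if_pow_in_base:
  fixes n :: nat
  assumes y: "y \<in> carrier G" and yn: "y [^]\<^bsub>G\<^esub> n = (g, 0)"
    and i: "i < p" and gi: "g i \<noteq> \<one>\<^bsub>H\<^esub>"
  shows "\<not> p_element G p y"
proof
  assume "p_element G p y"
  then obtain m where m: "G.ord y = p ^ m"
    by (auto simp: p_element_def)
  have "(g, 0) [^]\<^bsub>G\<^esub> (p ^ m) = (y [^]\<^bsub>G\<^esub> (p ^ m)) [^]\<^bsub>G\<^esub> n"
    using y by (simp add: G.nat_pow_pow mult.commute flip: yn)
  also have "\<dots> = \<one>\<^bsub>G\<^esub>"
    using G.pow_ord_eq_1[OF y] m by simp
  finally have "(g, 0) = \<one>\<^bsub>G\<^esub>"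
  proof (rule base_eq_one_if_pow_coprime[rotated])
    show "(g, 0) \<in> carrier G"
      using y by (simp flip: yn)
  qed (rule coprime_prime_power_order)
  then have "g i = \<one>\<^bsub>H\<^esub>"
    using i by (simp add: one_wreath)
  with gi show False ..
qed

lemma top_nonzero_if_ord_p:
  assumes x: "(f, a) \<in> carrier G" and ord: "G.ord (f, a) = p"
  shows "a \<noteq> 0"
proof
  assume "a = 0"
  moreover have "(f, a) [^]\<^bsub>G\<^esub> (p ^ 1) = \<one>\<^bsub>G\<^esub>"
    using G.pow_ord_eq_1[OF x] ord by simp
  ultimately have "(f, a) = \<one>\<^bsub>G\<^esub>"
    using x base_eq_one_if_pow_coprime coprime_prime_power_order by blast
  then have "G.ord (f, a) = 1"
    by simp
  with ord show False
    using prime_gt_1_nat[OF prime_p] by simp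
qed

lemma conj_rot_if_ord_p:
  assumes x: "x \<in> carrier G" and ord: "G.ord x = p"
  obtains c a where "c \<in> carrier G" "0 < a" "a < p" "inv\<^bsub>G\<^esub> c \<otimes>\<^bsub>G\<^esub> x \<otimes>\<^bsub>G\<^esub> c = rot a"
proof -
  obtain f a where fa: "x = (f, a)"
    by fastforce
  have a: "0 < a" "a < p"
    using top_nonzero_if_ord_p x ord by (auto simp: fa carrier_wreath)
  then have "\<not> p dvd a"
    by (auto dest: dvd_imp_le)
  then have "coprime a p"
    using prime_imp_coprime[OF prime_p] by (simp add: coprime_commute)
  moreover have "(f, a) [^]\<^bsub>G\<^esub> p = \<one>\<^bsub>G\<^esub>"
    using G.pow_ord_eq_1[OF x] ord by (simp add: fa)
  ultimately obtain h where h: "h \<in> {0..<p} \<rightarrow>\<^sub>E carrier H" "x \<otimes>\<^bsub>G\<^esub> (h, 0) = (h, 0) \<otimes>\<^bsub>G\<^esub> rot a"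
    using commute_base_rot_if_pow_eq_one x fa by blast
  have c: "(h, 0) \<in> carrier G"
    using h p_pos by (simp add: carrier_wreath)
  have "inv\<^bsub>G\<^esub> (h, 0) \<otimes>\<^bsub>G\<^esub> x \<otimes>\<^bsub>G\<^esub> (h, 0) = rot a"
    using h c x rot_closed a by (simp add: G.m_assoc G.inv_solve_left')
  with c a that show ?thesis
    by blast
qed

lemma cycle_product_coboundary_two_point:
  assumes "odd p" "0 < a" "a < p" "u \<in> carrier H" "v \<in> carrier H"
  shows "fst ((coboundary a (two_point a u v), (a + a) mod p) [^]\<^bsub>G\<^esub> p) (p - a)
    = u \<otimes>\<^bsub>H\<^esub> inv\<^bsub>H\<^esub> v \<otimes>\<^bsub>H\<^esub> (inv\<^bsub>H\<^esub> u \<otimes>\<^bsub>H\<^esub> v)"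
proof -
  define g where "g = coboundary a (two_point a u v)"
  define b where "b = (a + a) mod p"
  define m where "m = (p + 1) div 2"
  define pos where "pos k = (p - a + k * b) mod p" for k
  note orbit = double_step_orbit[OF prime_p assms(1-3), folded b_def m_def]
  have "a + a \<noteq> p"
    using \<open>odd p\<close> by auto
  note vals = coboundary_two_point[OF assms(2,3) this assms(4,5)]
  have g: "g \<in> {0..<p} \<rightarrow>\<^sub>E carrier H"
    using assms by (auto simp: g_def coboundary_def two_point_def PiE_mod_closed)
  have m: "1 < m" "m < p"
    using \<open>odd p\<close> prime_p assms(2,3) by (auto simp: m_def elim!: oddE)
  have inj: "inj_on pos {..<p}"
    unfolding pos_def using orbit(1) by (rule inj_on_affine_mod)
  have pos_0: "pos 0 = p - a" and pos_1: "pos 1 = a" and pos_m: "pos m = 0"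
    using assms(2) p_pos orbit(2,3) by (simp_all add: pos_def)
  have "(g, b) \<in> carrier G"
    using g p_pos by (simp add: carrier_wreath b_def)
  then have "fst ((g, b) [^]\<^bsub>G\<^esub> p) (p - a) = seq_prod H (\<lambda>k. g (pos k)) p"
    using assms by (simp add: pow_wreath pos_def)
  also have "\<dots> = g (pos 0) \<otimes>\<^bsub>H\<^esub> g (pos 1) \<otimes>\<^bsub>H\<^esub> g (pos m)"
  proof (rule H.seq_prod_reindex_three_support[OF inj m])
    show "g (pos k) \<in> carrier H" for k
      using g p_pos by (simp add: pos_def PiE_mod_closed)
    show "g (pos k) = \<one>\<^bsub>H\<^esub>" if "pos k \<notin> {pos 0, pos 1, pos m}" for k
    proof -
      have "pos k \<notin> {p - a, a, 0}"
        using that unfolding pos_0 pos_1 pos_m .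
      moreover have "pos k < p"
        using p_pos by (simp add: pos_def)
      ultimately show ?thesis
        using vals(4) by (simp add: g_def)
    qed
  qed
  also have "g (pos 0) = u"
    unfolding pos_0 g_def by (rule vals(1))
  also have "g (pos 1) = inv\<^bsub>H\<^esub> v"
    unfolding pos_1 g_def by (rule vals(2))
  also have "g (pos m) = inv\<^bsub>H\<^esub> u \<otimes>\<^bsub>H\<^esub> v"
    unfolding pos_m g_def by (rule vals(3))
  finally show ?thesis
    by (simp add: g_def b_def)
qed

lemma not_p_element_coboundary_two_point:
  assumes a: "0 < a" "a < p" and u: "u \<in> carrier H" and v: "v \<in> carrier H"
    and uv: "u \<otimes>\<^bsub>H\<^esub> v \<noteq> v \<otimes>\<^bsub>H\<^esub> u"
  shows "\<not> p_element G p (coboundary a (two_point a u v), (a + a) mod p)"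
proof -
  let ?y = "(coboundary a (two_point a u v), (a + a) mod p)"
  have y: "?y \<in> carrier G"
    using a u v by (auto simp: carrier_wreath coboundary_def two_point_def PiE_mod_closed)
  show ?thesis
  proof (cases "p = 2")
    case True
    then have "a = 1" "(a + a) mod p = 0"
      using a by simp_all
    then have "?y [^]\<^bsub>G\<^esub> (1 :: nat) = (coboundary a (two_point a u v), 0)"
      using y by simp
    moreover have "coboundary a (two_point a u v) 0 \<noteq> \<one>\<^bsub>H\<^esub>"
    proof
      assume "coboundary a (two_point a u v) 0 = \<one>\<^bsub>H\<^esub>"
      moreover have "coboundary a (two_point a u v) 0 = inv\<^bsub>H\<^esub> u \<otimes>\<^bsub>H\<^esub> v"
        using a by (simp add: coboundary_def two_point_def)
      ultimately have "u = v"
        using u v by (metis H.inv_equality H.inv_inv H.inv_closed)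
      with uv show False
        by simp
    qed
    ultimately show ?thesis
      using not_p_element_if_pow_in_base[OF y] p_pos by blast
  next
    case False
    then have "2 < p"
      using prime_ge_2_nat[OF prime_p] by simp
    then have "odd p"
      by (rule prime_odd_nat[OF prime_p])
    have "?y [^]\<^bsub>G\<^esub> p = (fst (?y [^]\<^bsub>G\<^esub> p), 0)"
      using y by (simp add: pow_wreath)
    moreover have "fst (?y [^]\<^bsub>G\<^esub> p) (p - a) \<noteq> \<one>\<^bsub>H\<^esub>"
      using cycle_product_coboundary_two_point[OF \<open>odd p\<close> a u v]
        H.commute_if_commutator_eq_one[OF u v] uv
      by auto
    moreover have "p - a < p"
      using a by simp
    ultimately show ?thesis
      using not_p_element_if_pow_in_base[OF y] by blast
  qed
qed

lemma exists_conj_rot_mult_rot_not_p_element: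
  assumes a: "0 < a" "a < p" and noncomm: "\<not> comm_group H"
  shows "\<exists>d \<in> carrier G. \<not> p_element G p (conj_elt G (rot a) d \<otimes>\<^bsub>G\<^esub> rot a)"
proof -
  obtain u v where u: "u \<in> carrier H" and v: "v \<in> carrier H" and uv: "u \<otimes>\<^bsub>H\<^esub> v \<noteq> v \<otimes>\<^bsub>H\<^esub> u"
    using noncomm H.group_comm_groupI by blast
  have h: "two_point a u v \<in> {0..<p} \<rightarrow>\<^sub>E carrier H"
    by (rule two_point_closed[OF u v])
  then have "(two_point a u v, 0) \<in> carrier G"
    using p_pos by (simp add: carrier_wreath)
  moreover have "\<not> p_element G p (conj_elt G (rot a) (two_point a u v, 0) \<otimes>\<^bsub>G\<^esub> rot a)"
    using not_p_element_coboundary_two_point[OF a u v uv] by (simp add: conj_rot_mult_rot[OF h a(2)])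
  ultimately show ?thesis
    by blast
qed

theorem exists_conj_mult_not_p_element:
  assumes noncomm: "\<not> comm_group H" and x: "x \<in> carrier G" and ord: "G.ord x = p"
  shows "\<exists>w \<in> carrier G. \<not> p_element G p (conj_elt G x w \<otimes>\<^bsub>G\<^esub> x)"
proof -
  obtain c a where c: "c \<in> carrier G" and a: "0 < a" "a < p"
    and conj: "inv\<^bsub>G\<^esub> c \<otimes>\<^bsub>G\<^esub> x \<otimes>\<^bsub>G\<^esub> c = rot a"
    using conj_rot_if_ord_p x ord by blast
  obtain d where "d \<in> carrier G" "\<not> p_element G p (conj_elt G (rot a) d \<otimes>\<^bsub>G\<^esub> rot a)"
    using exists_conj_rot_mult_rot_not_p_element a noncomm by blast
  then show ?thesis
    using exists_conj_mult_not_p_element_iso[OF G.is_group G.is_group G.conjugation_iso[OF c] x] conj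
    by auto
qed

end

theorem lemma2p1:
  fixes H :: "('a, 'b) monoid_scheme" and W :: "('c, 'd) monoid_scheme" and p :: nat
  assumes "Factorial_Ring.prime p"
    and "group H" and "finite (carrier H)" and "\<not> comm_group H"
    and "\<not> p dvd order H"
    and "group W" and "W \<cong> wreath_cyc H p"
    and "x \<in> carrier W" and "group.ord W x = p"
  shows "\<exists>w \<in> carrier W. \<not> p_element W p (conj_elt W x w \<otimes>\<^bsub>W\<^esub> x)"
proof -
  have "wreath_prime H p"
    using assms by (simp add: wreath_prime_def wreath_cyclic_def wreath_cyclic_axioms_def
        wreath_prime_axioms_def prime_gt_0_nat)
  then interpret wreath_prime H p .
  obtain \<phi> where \<phi>: "\<phi> \<in> iso W (wreath_cyc H p)"
    using assms(7) by (auto simp: is_iso_def)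
  have "\<phi> x \<in> carrier G" "G.ord (\<phi> x) = p"
    using \<phi> assms(6,8,9) ord_iso[OF assms(6) G.is_group \<phi>] by (auto simp: iso_iff)
  then obtain w' where "w' \<in> carrier G" "\<not> p_element G p (conj_elt G (\<phi> x) w' \<otimes>\<^bsub>G\<^esub> \<phi> x)"
    using exists_conj_mult_not_p_element assms(4) by blast
  then show ?thesis
    using exists_conj_mult_not_p_element_iso[OF assms(6) G.is_group \<phi> assms(8)] by blast
qed

end
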